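(* Let $H\le\widetilde{\mathcal{P}}_t$ be an abelian subgroup of $t$-qubit Pauli strings, let $C(H)\le\widetilde{\mathcal{P}}_t$ be its centralizer, and let $\widetilde{\mathcal{Q}}_t=\{\mathtt{I},\mathtt{X},\mathtt{Y}\}^{\times t}\subseteq\widetilde{\mathcal{P}}_t$ be the set of $\mathtt{Z}$-free strings. Then $$\lvert\widetilde{\mathcal{Q}}_t\cap C(H)\rvert=\frac{1}{\lvert H\rvert}\sum_{h\in H}3^{n_I(h)}(-1)^{n_Z(h)},$$ where $n_I(h)$ and $n_Z(h)$ denote the number of tensor positions at which $h$ equals $\mathtt{I}$ and $\mathtt{Z}$, respectively.
   Context: $\widetilde{\mathcal{P}}_t$ is the group of $t$-qubit Pauli operators modulo phases $\{\pm1,\pm i\}$, whose elements are strings in $\{\mathtt{I},\mathtt{X},\mathtt{Y},\mathtt{Z}\}^t$. A subgroup is abelian if its elements pairwise commute as operators (on representatives), and $C(H)$ is the set of strings in $\widetilde{\mathcal{P}}_t$ commuting with every element of $H$. *)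

theory Defs
  imports Complex_Main
begin

datatype pauli = PI | PX | PY | PZ

text \<open>Single-qubit Pauli product modulo phases (the Klein four-group).\<close>
fun pmul :: "pauli \<Rightarrow> pauli \<Rightarrow> pauli" where
  "pmul PI q = q"
| "pmul p PI = p"
| "pmul PX PX = PI" | "pmul PY PY = PI" | "pmul PZ PZ = PI"
| "pmul PX PY = PZ" | "pmul PY PX = PZ"
| "pmul PX PZ = PY" | "pmul PZ PX = PY"
| "pmul PY PZ = PX" | "pmul PZ PY = PX"

definition panti :: "pauli \<Rightarrow> pauli \<Rightarrow> bool" where
  "panti p q \<longleftrightarrow> p \<noteq> PI \<and> q \<noteq> PI \<and> p \<noteq> q"

definition pstrings :: "nat \<Rightarrow> pauli list set" where
  "pstrings t = {s. length s = t}"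

definition smul :: "pauli list \<Rightarrow> pauli list \<Rightarrow> pauli list" where
  "smul a b = map2 pmul a b"

definition sid :: "nat \<Rightarrow> pauli list" where
  "sid t = replicate t PI"

text \<open>Two Pauli strings commute (as operators) iff they anticommute at an even
  number of positions.\<close>
definition scommute :: "pauli list \<Rightarrow> pauli list \<Rightarrow> bool" where
  "scommute a b \<longleftrightarrow> even (card {i. i < length a \<and> panti (a ! i) (b ! i)})"

definition is_subgroup :: "nat \<Rightarrow> pauli list set \<Rightarrow> bool" where
  "is_subgroup t H \<longleftrightarrow> H \<subseteq> pstrings t \<and> sid t \<in> H \<and>
     (\<forall>a\<in>H. \<forall>b\<in>H. smul a b \<in> H)"

definition is_abelian :: "pauli list set \<Rightarrow> bool" where
  "is_abelian H \<longleftrightarrow> (\<forall>a\<in>H. \<forall>b\<in>H. scommute a b)"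

definition centralizer :: "nat \<Rightarrow> pauli list set \<Rightarrow> pauli list set" where
  "centralizer t H = {s \<in> pstrings t. \<forall>h\<in>H. scommute s h}"

definition zfree :: "nat \<Rightarrow> pauli list set" where
  "zfree t = {s \<in> pstrings t. set s \<subseteq> {PI, PX, PY}}"

definition nI :: "pauli list \<Rightarrow> nat" where
  "nI h = length (filter (\<lambda>p. p = PI) h)"

definition nZ :: "pauli list \<Rightarrow> nat" where
  "nZ h = length (filter (\<lambda>p. p = PZ) h)"

end

theory Submission
  imports Defs
begin

text \<open>Modulo phases the Pauli strings form the elementary abelian 2-group \<open>(\<int>\<^sub>2\<^sup>2)\<^sup>t\<close>,
  whose characters are \<open>h \<mapsto> (-1)^\<langle>q,h\<rangle>\<close> with \<open>\<langle>q,h\<rangle>\<close> the number of anticommuting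
  positions. Averaging the character of \<open>q\<close> over \<open>H\<close> gives 1 if \<open>q \<in> C(H)\<close> and 0
  otherwise, so \<open>|H| \<cdot> |Q \<inter> C(H)|\<close> is the sum of all characters \<open>\<chi>\<^sub>q(h)\<close> with
  \<open>q \<in> Q\<close> and \<open>h \<in> H\<close>. For fixed \<open>h\<close> the sum over \<open>q \<in> Q\<close> factorises over the positions,
  and the sum of \<open>\<chi>\<^sub>p(h\<^sub>i)\<close> over \<open>p \<in> {I, X, Y}\<close> is 3, 1, 1, -1 for \<open>h\<^sub>i\<close> = I, X, Y, Z.\<close>

instance pauli :: finite
proof
  have "(UNIV :: pauli set) = {PI, PX, PY, PZ}"
    by (auto intro: pauli.exhaust)
  then show "finite (UNIV :: pauli set)"
    by (metis finite.emptyI finite_insert)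
qed

lemma finite_pstrings: "finite (pstrings t)"
  by (simp add: pstrings_def finite_list_length)

lemma smul_Cons: "smul (a # as) (b # bs) = pmul a b # smul as bs"
  by (simp add: smul_def)

lemma smul_smul_cancel: "length a = length b \<Longrightarrow> smul a (smul a b) = b"
proof (induction a arbitrary: b)
  case Nil
  then show ?case by (simp add: smul_def)
next
  case (Cons x xs)
  from Cons.prems obtain y ys where "b = y # ys" "length ys = length xs"
    by (cases b) auto
  moreover have "pmul x (pmul x y) = y"
    by (cases x; cases y) simp_all
  ultimately show ?case
    using Cons.IH by (simp add: smul_Cons)
qed

lemma bij_betw_smul_subgroup:
  assumes H: "is_subgroup t H" and g: "g \<in> H"
  shows "bij_betw (smul g) H H"
proof -
  have "length g = length h" if "h \<in> H" for h
    using H g that by (auto simp: is_subgroup_def pstrings_def)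
  then have involution: "\<forall>h\<in>H. smul g (smul g h) = h"
    by (simp add: smul_smul_cancel)
  have closed: "smul g ` H \<subseteq> H"
    using H g by (auto simp: is_subgroup_def)
  show ?thesis
    using bij_betw_byWitness[OF involution involution closed closed] .
qed

definition pauli_sign :: "pauli \<Rightarrow> pauli \<Rightarrow> real" where
  "pauli_sign p q = (if panti p q then -1 else 1)"

lemma pauli_sign_pmul: "pauli_sign p (pmul a b) = pauli_sign p a * pauli_sign p b"
  by (cases p; cases a; cases b) (simp_all add: pauli_sign_def panti_def)

fun pauli_char :: "pauli list \<Rightarrow> pauli list \<Rightarrow> real" where
  "pauli_char (p # ps) (h # hs) = pauli_sign p h * pauli_char ps hs"
| "pauli_char _ _ = 1"

lemma pauli_char_eq_power:
  "pauli_char a b = (-1) ^ length (filter (\<lambda>(p, q). panti p q) (zip a b))"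
  by (induction a b rule: pauli_char.induct) (simp_all add: pauli_sign_def)

lemma pauli_char_eq_if_scommute:
  assumes "length a = length b"
  shows "pauli_char a b = (if scommute a b then 1 else -1)"
proof -
  have "card {i. i < length a \<and> panti (a ! i) (b ! i)}
      = length (filter (\<lambda>(p, q). panti p q) (zip a b))"
    using assms by (auto simp: length_filter_conv_card intro!: arg_cong[where f = card])
  then show ?thesis
    by (simp add: scommute_def pauli_char_eq_power minus_one_power_iff)
qed

lemma pauli_char_smul:
  "length q = length a \<Longrightarrow> length a = length b \<Longrightarrow>
    pauli_char q (smul a b) = pauli_char q a * pauli_char q b"
proof (induction q arbitrary: a b)
  case Nil
  then show ?case by (simp add: smul_def)
next
  case (Cons p ps)
  obtain x xs where a: "a = x # xs" "length xs = length ps"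
    using Cons.prems(1) by (cases a) auto
  obtain y ys where b: "b = y # ys" "length ys = length ps"
    using Cons.prems by (cases b) auto
  have "pauli_char ps (smul xs ys) = pauli_char ps xs * pauli_char ps ys"
    using Cons.IH a(2) b(2) by simp
  with a(1) b(1) show ?case
    by (simp add: smul_Cons pauli_sign_pmul)
qed

lemma sum_pauli_char_subgroup:
  assumes H: "is_subgroup t H" and q: "length q = t"
  shows "(\<Sum>h\<in>H. pauli_char q h) = (if q \<in> centralizer t H then real (card H) else 0)"
proof -
  have len: "length h = t" if "h \<in> H" for h
    using H that by (auto simp: is_subgroup_def pstrings_def)
  show ?thesis
  proof (cases "q \<in> centralizer t H")
    case True
    then have "pauli_char q h = 1" if "h \<in> H" for h
      using that len q by (simp add: centralizer_def pauli_char_eq_if_scommute)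
    with True show ?thesis
      by simp
  next
    case False
    with q obtain g where g: "g \<in> H" "\<not> scommute q g"
      by (auto simp: centralizer_def pstrings_def)
    have "(\<Sum>h\<in>H. pauli_char q h) = (\<Sum>h\<in>H. pauli_char q (smul g h))"
      using bij_betw_smul_subgroup[OF H g(1)] by (simp add: sum.reindex_bij_betw)
    also have "\<dots> = (\<Sum>h\<in>H. - pauli_char q h)"
    proof (rule sum.cong)
      fix h assume "h \<in> H"
      then show "pauli_char q (smul g h) = - pauli_char q h"
        using g len q by (simp add: pauli_char_smul pauli_char_eq_if_scommute)
    qed simp
    finally show ?thesis
      using False by (simp add: sum_negf)
  qed
qed

lemma zfree_Suc: "zfree (Suc n) = (\<lambda>(p, q). p # q) ` ({PI, PX, PY} \<times> zfree n)"
proof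
  show "zfree (Suc n) \<subseteq> (\<lambda>(p, q). p # q) ` ({PI, PX, PY} \<times> zfree n)"
  proof
    fix s assume "s \<in> zfree (Suc n)"
    then obtain p q where "s = p # q" "p \<in> {PI, PX, PY}" "q \<in> zfree n"
      by (cases s) (auto simp: zfree_def pstrings_def)
    then show "s \<in> (\<lambda>(p, q). p # q) ` ({PI, PX, PY} \<times> zfree n)"
      by force
  qed
qed (auto simp: zfree_def pstrings_def)

lemma sum_pauli_char_zfree:
  "(\<Sum>q\<in>zfree (length h). pauli_char q h) = 3 ^ nI h * (-1) ^ nZ h"
proof (induction h)
  case Nil
  have "zfree 0 = {[]}"
    by (auto simp: zfree_def pstrings_def)
  then show ?case
    by (simp add: nI_def nZ_def)
next
  case (Cons x hs)
  let ?Q = "zfree (length hs)"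
  have "inj_on (\<lambda>(p, q). p # q) ({PI, PX, PY} \<times> ?Q)"
    by (auto simp: inj_on_def)
  then have "(\<Sum>q\<in>zfree (length (x # hs)). pauli_char q (x # hs))
      = (\<Sum>(p, q)\<in>{PI, PX, PY} \<times> ?Q. pauli_sign p x * pauli_char q hs)"
    by (simp add: zfree_Suc sum.reindex case_prod_unfold)
  also have "\<dots> = (\<Sum>p\<in>{PI, PX, PY}. pauli_sign p x) * (\<Sum>q\<in>?Q. pauli_char q hs)"
    by (simp only: sum_product sum.cartesian_product)
  also have "\<dots> = 3 ^ nI (x # hs) * (-1) ^ nZ (x # hs)"
    using Cons.IH by (cases x) (simp_all add: pauli_sign_def panti_def nI_def nZ_def)
  finally show ?case .
qed

theorem theorem8:
  fixes t :: nat and H :: "pauli list set"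
  assumes "is_subgroup t H" and "is_abelian H"
  shows "(of_nat (card (zfree t \<inter> centralizer t H)) :: real) =
    (1 / of_nat (card H)) * (\<Sum>h\<in>H. 3 ^ nI h * (-1) ^ nZ h)"
proof -
  have len_H: "\<And>h. h \<in> H \<Longrightarrow> length h = t"
    using assms(1) by (auto simp: is_subgroup_def pstrings_def)
  have "finite H" and "sid t \<in> H"
    using assms(1) finite_pstrings by (auto simp: is_subgroup_def intro: finite_subset)
  then have card_H: "card H > 0"
    by (auto simp: card_gt_0_iff)
  have "finite (zfree t)"
    using finite_pstrings by (simp add: zfree_def)
  then have "real (card H) * card (zfree t \<inter> centralizer t H)
      = (\<Sum>q\<in>zfree t. if q \<in> centralizer t H then real (card H) else 0)"
    by (simp add: sum.If_cases Int_def)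
  also have "\<dots> = (\<Sum>q\<in>zfree t. \<Sum>h\<in>H. pauli_char q h)"
    by (intro sum.cong) (simp_all add: sum_pauli_char_subgroup[OF assms(1)] zfree_def pstrings_def)
  also have "\<dots> = (\<Sum>h\<in>H. \<Sum>q\<in>zfree t. pauli_char q h)"
    by (rule sum.swap)
  also have "\<dots> = (\<Sum>h\<in>H. 3 ^ nI h * (-1) ^ nZ h)"
    using len_H sum_pauli_char_zfree by (intro sum.cong) auto
  finally show ?thesis
    using card_H by (simp add: field_simps)
qed

end
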